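(* In the setup of the context, for all $x,y,z\in B$: (a) $\gamma_{x,y,z}$ and $n_x$ do not depend on the choice of the balanced representations $\rho_\lambda$; more precisely, $\sum_\lambda f_\lambda^{-1}v^{3a_\lambda}\chi_\lambda(xyz)$ and $\sum_\lambda f_\lambda^{-1}v^{a_\lambda}\chi_\lambda(x^\ast)$ lie in $\mathcal{O}$ and $\gamma_{x,y,z}\equiv\sum_{\lambda\in\Lambda}f_\lambda^{-1}v^{3a_\lambda}\chi_\lambda(xyz)\pmod{\mathfrak m}$, $\ n_x\equiv\sum_{\lambda\in\Lambda}f_\lambda^{-1}v^{a_\lambda}\chi_\lambda(x^\ast)\pmod{\mathfrak m}$; (b) $\gamma_{x,y,z}=\gamma_{y,z,x}$; (c) $\sum_{z\in B}\gamma_{x^\ast,y,z}\,n_z=\delta_{xy}$; (d) $\gamma_{x,y,z}=\gamma_{y^\ast,x^\ast,z^\ast}$; (e) $n_x=n_{x^\ast}$.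
   Context: Setup: $\Gamma$ totally ordered abelian group; $K$ field with surjective valuation $\nu:K\to\Gamma\cup\{\infty\}$, valuation ring $\mathcal{O}$, maximal ideal $\mathfrak m$, residue field $F=\mathcal{O}/\mathfrak m$ which is formally real. $H$ a finite-dimensional split semisimple symmetric $K$-algebra with trace form $\tau$, $\ast$ a $K$-linear involutive antiautomorphism, $B$ a $\ast$-symmetric basis ($B^\ast=B$, $\tau(bc^\ast)=\delta_{bc}$). Simple modules indexed by $\Lambda$, characters $\chi_\lambda$, Schur elements $c_\lambda$ ($\tau=\sum c_\lambda^{-1}\chi_\lambda$), $a_\lambda:=-\tfrac12\nu(c_\lambda)$, which lies in $\Gamma$. Fix a partial section: a group homomorphism $\Gamma_0:=\langle a_\lambda\mid\lambda\in\Lambda\rangle\to K^\times$, $\gamma\mapsto v^\gamma$, with $\nu(v^\gamma)=\gamma$; put $f_\lambda:=v^{2a_\lambda}c_\lambda\in\mathcal{O}^\times$ (viewed in $F$ via reduction when appropriate). An irreducible matrix representation $\rho:H\to K^{d\times d}$ of type $\lambda$ is balanced if $\nu(\rho(b))\ge-a_\lambda$ for all $b$ in every $\ast$-symmetric basis. For each $\lambda$ choose a balanced $\rho_\lambda:H\to K^{d_\lambda\times d_\lambda}$ of type $\lambda$ and put $c^\lambda(x):=v^{a_\lambda}\rho_\lambda(x)\bmod\mathfrak m\in F^{d_\lambda\times d_\lambda}$. Define $\gamma_{x,y,z}:=\sum_\lambda\sum_{\mathfrak s,\mathfrak t,\mathfrak u}f_\lambda^{-1}c^\lambda(x)_{\mathfrak{st}}c^\lambda(y)_{\mathfrak{tu}}c^\lambda(z)_{\mathfrak{us}}\in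 F$ and $n_x:=\sum_\lambda\sum_{\mathfrak s}f_\lambda^{-1}c^\lambda(x^\ast)_{\mathfrak{ss}}\in F$. *)

theory Defs
  imports Main "Jordan_Normal_Form.Matrix"
begin

text \<open>A valuation nu : K -> Gamma \<union> {infinity} is encoded by its restriction to the
  nonzero elements of K; the value of 0 is infinity, i.e. larger than every element
  of Gamma.\<close>

definition is_surj_valuation :: "('k::field \<Rightarrow> 'g::linordered_ab_group_add) \<Rightarrow> bool" where
  "is_surj_valuation nu \<longleftrightarrow>
     (\<forall>x y. x \<noteq> 0 \<longrightarrow> y \<noteq> 0 \<longrightarrow> nu (x * y) = nu x + nu y) \<and>
     (\<forall>x y. x \<noteq> 0 \<longrightarrow> y \<noteq> 0 \<longrightarrow> x + y \<noteq> 0 \<longrightarrow> min (nu x) (nu y) \<le> nu (x + y)) \<and>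
     (\<forall>g. \<exists>x. x \<noteq> 0 \<and> nu x = g)"

definition val_ring :: "('k::field \<Rightarrow> 'g::linordered_ab_group_add) \<Rightarrow> 'k set" where
  "val_ring nu = {x. x = 0 \<or> 0 \<le> nu x}"

definition val_ideal :: "('k::field \<Rightarrow> 'g::linordered_ab_group_add) \<Rightarrow> 'k set" where
  "val_ideal nu = {x. x = 0 \<or> 0 < nu x}"

definition val_ge :: "('k::field \<Rightarrow> 'g::linordered_ab_group_add) \<Rightarrow> 'k \<Rightarrow> 'g \<Rightarrow> bool" where
  "val_ge nu x g \<longleftrightarrow> x = 0 \<or> g \<le> nu x"

text \<open>The residue field F = O/m is represented by a field type 'f together with the
  reduction map res : O -> F, a surjective ring homomorphism with kernel m
  (the values of res outside O are irrelevant).\<close>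
definition is_residue_map ::
  "('k::field \<Rightarrow> 'g::linordered_ab_group_add) \<Rightarrow> ('k \<Rightarrow> 'f::field) \<Rightarrow> bool" where
  "is_residue_map nu res \<longleftrightarrow>
     (\<forall>x\<in>val_ring nu. \<forall>y\<in>val_ring nu. res (x + y) = res x + res y \<and> res (x * y) = res x * res y) \<and>
     res 1 = 1 \<and>
     (\<forall>x\<in>val_ring nu. res x = 0 \<longleftrightarrow> x \<in> val_ideal nu) \<and>
     res ` val_ring nu = UNIV"

definition formally_real :: "'f::field itself \<Rightarrow> bool" where
  "formally_real TYPE('f) \<longleftrightarrow> (\<forall>xs::'f list. sum_list (map (\<lambda>x. x ^ 2) xs) \<noteq> - 1)"

definition is_K_algebra :: "('k::field \<Rightarrow> 'h::ring_1 \<Rightarrow> 'h) \<Rightarrow> bool" where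
  "is_K_algebra scale \<longleftrightarrow> vector_space scale \<and>
     (\<forall>a x y. scale a (x * y) = scale a x * y \<and> scale a (x * y) = x * scale a y)"

definition is_involution :: "('k::field \<Rightarrow> 'h::ring_1 \<Rightarrow> 'h) \<Rightarrow> ('h \<Rightarrow> 'h) \<Rightarrow> bool" where
  "is_involution scale star \<longleftrightarrow>
     (\<forall>x y. star (x + y) = star x + star y) \<and>
     (\<forall>a x. star (scale a x) = scale a (star x)) \<and>
     (\<forall>x y. star (x * y) = star y * star x) \<and>
     (\<forall>x. star (star x) = x)"

definition is_matrix_rep ::
  "('k::field \<Rightarrow> 'h::ring_1 \<Rightarrow> 'h) \<Rightarrow> nat \<Rightarrow> ('h \<Rightarrow> 'k mat) \<Rightarrow> bool" where
  "is_matrix_rep scale n rho \<longleftrightarrow>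
     (\<forall>x. rho x \<in> carrier_mat n n) \<and>
     (\<forall>x y. rho (x + y) = rho x + rho y) \<and>
     (\<forall>a x. rho (scale a x) = a \<cdot>\<^sub>m rho x) \<and>
     (\<forall>x y. rho (x * y) = rho x * rho y) \<and>
     rho 1 = 1\<^sub>m n"

text \<open>Split semisimple, with simple modules indexed by Lam: the representations
  sigma lam (of dimension d lam) of the (pairwise non-isomorphic) simple modules
  V_lam together induce an algebra isomorphism H = prod_lam K^(d_lam x d_lam)
  (Wedderburn decomposition).\<close>
definition is_split_semisimple_wedderburn ::
  "('k::field \<Rightarrow> 'h::ring_1 \<Rightarrow> 'h) \<Rightarrow> 'l set \<Rightarrow> ('l \<Rightarrow> nat) \<Rightarrow> ('l \<Rightarrow> 'h \<Rightarrow> 'k mat) \<Rightarrow> bool" where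
  "is_split_semisimple_wedderburn scale Lam d sigma \<longleftrightarrow>
     finite Lam \<and>
     (\<forall>lam\<in>Lam. 0 < d lam \<and> is_matrix_rep scale (d lam) (sigma lam)) \<and>
     (\<forall>x y. (\<forall>lam\<in>Lam. sigma lam x = sigma lam y) \<longrightarrow> x = y) \<and>
     (\<forall>M. (\<forall>lam\<in>Lam. M lam \<in> carrier_mat (d lam) (d lam)) \<longrightarrow>
          (\<exists>x. \<forall>lam\<in>Lam. sigma lam x = M lam))"

definition mat_trace :: "'a::comm_ring_1 mat \<Rightarrow> 'a" where
  "mat_trace M = (\<Sum>i<dim_row M. M $$ (i, i))"

definition character :: "('l \<Rightarrow> 'h \<Rightarrow> 'k::field mat) \<Rightarrow> 'l \<Rightarrow> 'h \<Rightarrow> 'k" where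
  "character sigma lam h = mat_trace (sigma lam h)"

definition is_symmetrizing_trace ::
  "('k::field \<Rightarrow> 'h::ring_1 \<Rightarrow> 'h) \<Rightarrow> ('h \<Rightarrow> 'k) \<Rightarrow> bool" where
  "is_symmetrizing_trace scale tau \<longleftrightarrow>
     (\<forall>x y. tau (x + y) = tau x + tau y) \<and>
     (\<forall>a x. tau (scale a x) = a * tau x) \<and>
     (\<forall>x y. tau (x * y) = tau (y * x)) \<and>
     (\<forall>x. (\<forall>y. tau (x * y) = 0) \<longrightarrow> x = 0)"

definition are_schur_elements ::
  "('h \<Rightarrow> 'k::field) \<Rightarrow> 'l set \<Rightarrow> ('l \<Rightarrow> 'h \<Rightarrow> 'k mat) \<Rightarrow> ('l \<Rightarrow> 'k) \<Rightarrow> bool" where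
  "are_schur_elements tau Lam sigma c \<longleftrightarrow>
     (\<forall>lam\<in>Lam. c lam \<noteq> 0) \<and>
     (\<forall>h. tau h = (\<Sum>lam\<in>Lam. inverse (c lam) * character sigma lam h))"

definition is_star_sym_basis ::
  "('k::field \<Rightarrow> 'h::ring_1 \<Rightarrow> 'h) \<Rightarrow> ('h \<Rightarrow> 'k) \<Rightarrow> ('h \<Rightarrow> 'h) \<Rightarrow> 'h set \<Rightarrow> bool" where
  "is_star_sym_basis scale tau star B \<longleftrightarrow>
     \<not> module.dependent scale B \<and> module.span scale B = UNIV \<and>
     star ` B = B \<and>
     (\<forall>b\<in>B. \<forall>c\<in>B. tau (b * star c) = (if b = c then 1 else 0))"

text \<open>Irreducible matrix representation of type lam: isomorphic to V_lam, i.e.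
  conjugate to sigma lam by an invertible matrix.\<close>
definition is_rep_of_type ::
  "('k::field \<Rightarrow> 'h::ring_1 \<Rightarrow> 'h) \<Rightarrow> ('l \<Rightarrow> nat) \<Rightarrow> ('l \<Rightarrow> 'h \<Rightarrow> 'k mat) \<Rightarrow> 'l \<Rightarrow> ('h \<Rightarrow> 'k mat) \<Rightarrow> bool" where
  "is_rep_of_type scale d sigma lam rho \<longleftrightarrow>
     is_matrix_rep scale (d lam) rho \<and>
     (\<exists>P Q. P \<in> carrier_mat (d lam) (d lam) \<and> Q \<in> carrier_mat (d lam) (d lam) \<and>
        P * Q = 1\<^sub>m (d lam) \<and> Q * P = 1\<^sub>m (d lam) \<and>
        (\<forall>h. rho h = P * sigma lam h * Q))"

text \<open>balanced: nu(rho(b)) >= -a_lam for all b in every star-symmetric basis, where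
  the valuation of a matrix is the minimum of the valuations of its entries.\<close>
definition is_balanced ::
  "('k::field \<Rightarrow> 'g::linordered_ab_group_add) \<Rightarrow> ('k \<Rightarrow> 'h::ring_1 \<Rightarrow> 'h) \<Rightarrow> ('h \<Rightarrow> 'k) \<Rightarrow>
   ('h \<Rightarrow> 'h) \<Rightarrow> ('l \<Rightarrow> nat) \<Rightarrow> ('l \<Rightarrow> 'h \<Rightarrow> 'k mat) \<Rightarrow> ('l \<Rightarrow> 'g) \<Rightarrow> 'l \<Rightarrow> ('h \<Rightarrow> 'k mat) \<Rightarrow> bool" where
  "is_balanced nu scale tau star d sigma a lam rho \<longleftrightarrow>
     is_rep_of_type scale d sigma lam rho \<and>
     (\<forall>B'. is_star_sym_basis scale tau star B' \<longrightarrow>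
        (\<forall>b\<in>B'. \<forall>i<d lam. \<forall>j<d lam. val_ge nu (rho b $$ (i, j)) (- a lam)))"

inductive_set gen_subgroup :: "'g::ab_group_add set \<Rightarrow> 'g set" for A where
  gen_zero: "0 \<in> gen_subgroup A"
| gen_base: "g \<in> A \<Longrightarrow> g \<in> gen_subgroup A"
| gen_add: "g \<in> gen_subgroup A \<Longrightarrow> h \<in> gen_subgroup A \<Longrightarrow> g + h \<in> gen_subgroup A"
| gen_uminus: "g \<in> gen_subgroup A \<Longrightarrow> - g \<in> gen_subgroup A"

definition is_partial_section ::
  "('k::field \<Rightarrow> 'g::linordered_ab_group_add) \<Rightarrow> 'g set \<Rightarrow> ('g \<Rightarrow> 'k) \<Rightarrow> bool" where
  "is_partial_section nu G0 v \<longleftrightarrow>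
     (\<forall>g\<in>G0. \<forall>h\<in>G0. v (g + h) = v g * v h) \<and>
     (\<forall>g\<in>G0. v g \<noteq> 0 \<and> nu (v g) = g)"

definition fcoef :: "('g::linordered_ab_group_add \<Rightarrow> 'k::field) \<Rightarrow> ('l \<Rightarrow> 'g) \<Rightarrow> ('l \<Rightarrow> 'k) \<Rightarrow> 'l \<Rightarrow> 'k" where
  "fcoef v a c lam = v (a lam + a lam) * c lam"

definition leadmat ::
  "('k::field \<Rightarrow> 'f::field) \<Rightarrow> ('g::linordered_ab_group_add \<Rightarrow> 'k) \<Rightarrow> ('l \<Rightarrow> 'g) \<Rightarrow>
   ('l \<Rightarrow> 'h \<Rightarrow> 'k mat) \<Rightarrow> 'l \<Rightarrow> 'h \<Rightarrow> 'f mat" where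
  "leadmat res v a rho lam x = map_mat res (v (a lam) \<cdot>\<^sub>m rho lam x)"

definition gamma_coef ::
  "('k::field \<Rightarrow> 'f::field) \<Rightarrow> ('g::linordered_ab_group_add \<Rightarrow> 'k) \<Rightarrow> ('l \<Rightarrow> 'g) \<Rightarrow> ('l \<Rightarrow> 'k) \<Rightarrow>
   'l set \<Rightarrow> ('l \<Rightarrow> nat) \<Rightarrow> ('l \<Rightarrow> 'h \<Rightarrow> 'k mat) \<Rightarrow> 'h \<Rightarrow> 'h \<Rightarrow> 'h \<Rightarrow> 'f" where
  "gamma_coef res v a c Lam d rho x y z =
     (\<Sum>lam\<in>Lam. \<Sum>s<d lam. \<Sum>t<d lam. \<Sum>u<d lam.
        inverse (res (fcoef v a c lam)) *
        leadmat res v a rho lam x $$ (s, t) *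
        leadmat res v a rho lam y $$ (t, u) *
        leadmat res v a rho lam z $$ (u, s))"

definition n_coef ::
  "('k::field \<Rightarrow> 'f::field) \<Rightarrow> ('g::linordered_ab_group_add \<Rightarrow> 'k) \<Rightarrow> ('l \<Rightarrow> 'g) \<Rightarrow> ('l \<Rightarrow> 'k) \<Rightarrow>
   'l set \<Rightarrow> ('l \<Rightarrow> nat) \<Rightarrow> ('l \<Rightarrow> 'h \<Rightarrow> 'k mat) \<Rightarrow> ('h \<Rightarrow> 'h) \<Rightarrow> 'h \<Rightarrow> 'f" where
  "n_coef res v a c Lam d rho star x =
     (\<Sum>lam\<in>Lam. \<Sum>s<d lam. inverse (res (fcoef v a c lam)) * leadmat res v a rho lam (star x) $$ (s, s))"

end

theory Submission
  imports Defs
begin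

text \<open>
  Since \<open>\<rho>\<^sub>\<lambda>\<close> is conjugate to \<open>\<sigma>\<^sub>\<lambda>\<close> and its rescaled entries \<open>v\<^sup>a\<^sup>\<lambda> \<rho>\<^sub>\<lambda>(b)\<close> are
  integral, the residue of a trace of a product of rescaled matrices is the trace of the product
  of their residues; so \<open>\<gamma>\<close> and \<open>n\<close> are residues of character sums, which gives (a),
  and (b) is cyclicity of the trace. Expanding the linear form \<open>z \<mapsto> \<gamma>(x\<^sup>*, y, z)\<close> in the
  \<open>\<tau>\<close>-dual basis \<open>B\<^sup>*\<close> evaluates the sum in (c) to \<open>\<tau>(x\<^sup>* y) = \<delta>\<^sub>x\<^sub>y\<close>.
  For (d) and (e) one needs \<open>\<chi>\<^sub>\<lambda>(h\<^sup>*) = \<chi>\<^sub>\<lambda>(h)\<close>. The image under \<open>\<sigma>\<^sub>\<lambda>\<close> of the central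
  idempotent \<open>e\<^sub>\<lambda>\<^sup>*\<close> is \<open>0\<close> or \<open>1\<close>; it cannot be \<open>0\<close>, since then the residues of the
  integral numbers \<open>v\<^sup>a\<^sup>\<lambda> \<rho>\<^sub>\<lambda>(b\<^sup>*)\<^sub>0\<^sub>0\<close> would have vanishing sum of squares, hence all
  vanish as \<open>F\<close> is formally real, while pairing them with those of \<open>v\<^sup>a\<^sup>\<lambda> \<rho>\<^sub>\<lambda>(b)\<^sub>0\<^sub>0\<close> yields the residue of the
  unit \<open>f\<^sub>\<lambda>\<close>. Hence \<open>h \<mapsto> \<chi>\<^sub>\<lambda>(h\<^sup>*)\<close> is a cyclic linear form on the block of \<open>\<lambda>\<close>, and
  such a form is a multiple of \<open>\<chi>\<^sub>\<lambda>\<close>.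
\<close>

section \<open>Valuation rings and residue maps\<close>

locale valued_residue_field =
  fixes nu :: "'k::field \<Rightarrow> 'g::linordered_ab_group_add" and res :: "'k \<Rightarrow> 'f::field"
  assumes valuation: "is_surj_valuation nu"
    and residue_map: "is_residue_map nu res"
begin

lemma nu_mult: "x \<noteq> 0 \<Longrightarrow> y \<noteq> 0 \<Longrightarrow> nu (x * y) = nu x + nu y"
  using valuation unfolding is_surj_valuation_def by blast

lemma nu_add: "x \<noteq> 0 \<Longrightarrow> y \<noteq> 0 \<Longrightarrow> x + y \<noteq> 0 \<Longrightarrow> min (nu x) (nu y) \<le> nu (x + y)"
  using valuation unfolding is_surj_valuation_def by blast

lemma nu_one: "nu 1 = 0"
  using nu_mult[of 1 1] by simp

lemma nu_inverse: "x \<noteq> 0 \<Longrightarrow> nu (inverse x) = - nu x"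
  using nu_mult[of x "inverse x"] by (simp add: nu_one eq_neg_iff_add_eq_0 add.commute)

lemma val_ring_zero [simp]: "0 \<in> val_ring nu"
  and val_ring_one [simp]: "1 \<in> val_ring nu"
  by (simp_all add: val_ring_def nu_one)

lemma val_ring_mult:
  assumes "x \<in> val_ring nu" "y \<in> val_ring nu" shows "x * y \<in> val_ring nu"
  using assms by (cases "x = 0 \<or> y = 0") (auto simp: val_ring_def nu_mult)

lemma val_ring_add:
  assumes x: "x \<in> val_ring nu" and y: "y \<in> val_ring nu" shows "x + y \<in> val_ring nu"
proof (cases "x = 0 \<or> y = 0 \<or> x + y = 0")
  case False
  then have "0 \<le> min (nu x) (nu y)" and "min (nu x) (nu y) \<le> nu (x + y)"
    using nu_add x y by (auto simp: val_ring_def)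
  then have "0 \<le> nu (x + y)" by (rule order_trans)
  then show ?thesis by (simp add: val_ring_def)
qed (use x y in auto)

lemma val_ring_sum: "(\<And>i. i \<in> S \<Longrightarrow> g i \<in> val_ring nu) \<Longrightarrow> sum g S \<in> val_ring nu"
  by (induction S rule: infinite_finite_induct) (auto intro: val_ring_add)

lemma val_ring_of_nat [simp]: "of_nat n \<in> val_ring nu"
  by (induction n) (auto intro: val_ring_add)

lemma val_ring_unit: "u \<noteq> 0 \<Longrightarrow> nu u = 0 \<Longrightarrow> inverse u \<in> val_ring nu"
  by (simp add: val_ring_def nu_inverse)

lemma val_ring_mult_val_ge:
  assumes "w \<noteq> 0" "val_ge nu x (- nu w)" shows "w * x \<in> val_ring nu"
proof (cases "x = 0")
  case False
  then have "- nu w \<le> nu x" using assms(2) by (simp add: val_ge_def)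
  then have "0 \<le> nu w + nu x" using diff_ge_0_iff_ge[of "nu x" "- nu w"] by (simp add: add.commute)
  then show ?thesis using assms(1) False by (simp add: val_ring_def nu_mult)
qed simp

lemma res_add: "x \<in> val_ring nu \<Longrightarrow> y \<in> val_ring nu \<Longrightarrow> res (x + y) = res x + res y"
  and res_mult: "x \<in> val_ring nu \<Longrightarrow> y \<in> val_ring nu \<Longrightarrow> res (x * y) = res x * res y"
  and res_one [simp]: "res 1 = 1"
  and res_eq_0_iff: "x \<in> val_ring nu \<Longrightarrow> res x = 0 \<longleftrightarrow> x \<in> val_ideal nu"
  using residue_map unfolding is_residue_map_def by blast+

lemma res_zero [simp]: "res 0 = 0"
proof -
  have "res 0 = res 0 + res 0" using res_add[of 0 0] by simp
  then show ?thesis by (metis add_cancel_left_right)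
qed

lemma res_sum: "(\<And>i. i \<in> S \<Longrightarrow> g i \<in> val_ring nu) \<Longrightarrow> res (sum g S) = (\<Sum>i\<in>S. res (g i))"
proof (induction S rule: infinite_finite_induct)
  case (insert x F)
  then show ?case by (simp add: res_add val_ring_sum)
qed simp_all

lemma res_of_nat [simp]: "res (of_nat n) = of_nat n"
  by (induction n) (auto simp: res_add val_ring_sum)

lemma res_unit:
  assumes "u \<noteq> 0" "nu u = 0"
  shows "res u \<noteq> 0" "res (inverse u) = inverse (res u)"
proof -
  have u: "u \<in> val_ring nu" using assms by (simp add: val_ring_def)
  show nz: "res u \<noteq> 0" using res_eq_0_iff[OF u] assms by (simp add: val_ideal_def)
  have "res u * res (inverse u) = 1"
    using res_mult[OF u val_ring_unit[OF assms]] assms by simp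
  then show "res (inverse u) = inverse (res u)" using nz by (simp add: field_simps)
qed

end

lemma formally_real_sum_squares_eq_0:
  fixes g :: "'a \<Rightarrow> 'f::field"
  assumes "formally_real TYPE('f)" "finite S" "(\<Sum>s\<in>S. g s * g s) = 0" "s0 \<in> S"
  shows "g s0 = 0"
proof (rule ccontr)
  assume nz: "g s0 \<noteq> 0"
  obtain xs where xs: "set xs = S - {s0}" "distinct xs"
    using finite_distinct_list[of "S - {s0}"] assms(2) by blast
  have "(\<Sum>s\<in>S - {s0}. g s * g s) = - (g s0 * g s0)"
    using assms(2-4) by (simp add: sum.remove eq_neg_iff_add_eq_0 add.commute)
  then have "(\<Sum>s\<in>S - {s0}. (g s / g s0) ^ 2) = -1"
    using nz by (simp add: power2_eq_square sum_divide_distrib[symmetric])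
  moreover have "sum_list (map (\<lambda>x. x ^ 2) (map (\<lambda>s. g s / g s0) xs)) = (\<Sum>s\<in>S - {s0}. (g s / g s0) ^ 2)"
    using xs by (simp add: sum_list_distinct_conv_sum_set o_def)
  ultimately show False using assms(1) unfolding formally_real_def by metis
qed

lemma formally_real_of_nat_neq_0:
  assumes "formally_real TYPE('f::field)" "0 < n" shows "(of_nat n :: 'f) \<noteq> 0"
  using formally_real_sum_squares_eq_0[OF assms(1), of "{..<n}" "\<lambda>_. 1" 0] assms(2) by auto

section \<open>Matrices\<close>

lemma index_mult_mat_sum:
  assumes "A \<in> carrier_mat n n" "B \<in> carrier_mat n n" "i < n" "j < n"
  shows "(A * B) $$ (i, j) = (\<Sum>k<n. A $$ (i, k) * B $$ (k, j))"
  using assms by (simp add: scalar_prod_def atLeast0LessThan)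

lemma mat_trace_carrier: "A \<in> carrier_mat n n \<Longrightarrow> mat_trace A = (\<Sum>i<n. A $$ (i, i))"
  unfolding mat_trace_def by simp

lemma mat_trace_one [simp]: "mat_trace (1\<^sub>m n) = of_nat n"
  by (simp add: mat_trace_def)

lemma mat_trace_smult: "A \<in> carrier_mat n n \<Longrightarrow> mat_trace (k \<cdot>\<^sub>m A) = k * mat_trace A"
  unfolding mat_trace_def sum_distrib_left by (intro sum.cong) auto

lemma mat_trace_mult_comm:
  assumes A: "A \<in> carrier_mat n n" and B: "B \<in> carrier_mat n n"
  shows "mat_trace (A * B) = mat_trace (B * A)"
proof -
  have "mat_trace (A * B) = (\<Sum>i<n. \<Sum>k<n. A $$ (i, k) * B $$ (k, i))"
    using assms by (simp add: mat_trace_carrier[of _ n] index_mult_mat_sum del: index_mult_mat(1))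
  also have "\<dots> = (\<Sum>k<n. \<Sum>i<n. B $$ (k, i) * A $$ (i, k))"
    by (subst sum.swap) (simp add: mult.commute)
  also have "\<dots> = mat_trace (B * A)"
    using assms by (simp add: mat_trace_carrier[of _ n] index_mult_mat_sum del: index_mult_mat(1))
  finally show ?thesis .
qed

lemma mat_trace_similar:
  assumes "P \<in> carrier_mat n n" "A \<in> carrier_mat n n" "Q \<in> carrier_mat n n" "Q * P = 1\<^sub>m n"
  shows "mat_trace (P * A * Q) = mat_trace A"
proof -
  have "mat_trace (P * A * Q) = mat_trace (Q * (P * A))"
    using assms by (intro mat_trace_mult_comm) auto
  also have "Q * (P * A) = A"
    using assms by (simp flip: assoc_mult_mat[of Q n n P n A n])
  finally show ?thesis .
qed

lemma mat_trace_mult3_sum: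
  assumes X: "X \<in> carrier_mat n n" and Y: "Y \<in> carrier_mat n n" and Z: "Z \<in> carrier_mat n n"
  shows "mat_trace (X * (Y * Z)) = (\<Sum>s<n. \<Sum>t<n. \<Sum>u<n. X $$ (s, t) * Y $$ (t, u) * Z $$ (u, s))"
  using assms
  by (simp add: mat_trace_carrier[of _ n] index_mult_mat_sum[of _ n] sum_distrib_left mult.assoc del: index_mult_mat(1))

lemma sum_sum_delta:
  assumes "p < n" "q < (n::nat)"
  shows "(\<Sum>i<n. \<Sum>j<n. if i = p \<and> j = q then f i j else 0) = f p q"
proof -
  have "(\<Sum>j<n. if i = p \<and> j = q then f i j else 0) = (if i = p then f i q else 0)" for i
    using assms by auto
  then show ?thesis using assms by simp
qed

definition mat_unit :: "nat \<Rightarrow> nat \<Rightarrow> nat \<Rightarrow> 'a::comm_ring_1 mat" where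
  "mat_unit n i j = mat n n (\<lambda>(p, q). if p = i \<and> q = j then 1 else 0)"

lemma mat_unit_carrier [simp]: "mat_unit n i j \<in> carrier_mat n n"
  and mat_unit_dim [simp]: "dim_row (mat_unit n i j) = n" "dim_col (mat_unit n i j) = n"
  by (simp_all add: mat_unit_def)

lemma mat_unit_index [simp]:
  "p < n \<Longrightarrow> q < n \<Longrightarrow> mat_unit n i j $$ (p, q) = (if p = i \<and> q = j then 1 else 0)"
  by (simp add: mat_unit_def)

lemma mult_mat_unit_index:
  assumes "A \<in> carrier_mat n n" "i < n" "p < n" "q < n"
  shows "(A * mat_unit n i j) $$ (p, q) = (if q = j then A $$ (p, i) else 0)"
  using assms by (simp add: index_mult_mat_sum[of _ n] if_distrib[of "\<lambda>x. _ * x"] sum.If_cases del: index_mult_mat(1))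

lemma mat_unit_mult_index:
  assumes "A \<in> carrier_mat n n" "j < n" "p < n" "q < n"
  shows "(mat_unit n i j * A) $$ (p, q) = (if p = i then A $$ (j, q) else 0)"
proof -
  have "(mat_unit n i j * A) $$ (p, q) = (\<Sum>k<n. (if p = i \<and> k = j then 1 else 0) * A $$ (k, q))"
    using assms by (simp add: index_mult_mat_sum[of _ n] del: index_mult_mat(1))
  also have "\<dots> = (\<Sum>k<n. if k = j then (if p = i then A $$ (k, q) else 0) else 0)"
    by (intro sum.cong) auto
  finally show ?thesis using assms by simp
qed

lemma mat_unit_mult_mat_unit:
  assumes "j < n" "k < n"
  shows "mat_unit n i j * mat_unit n k l = (if j = k then mat_unit n i l else 0\<^sub>m n n)"
  by (rule eq_matI) (use assms in \<open>auto simp: mat_unit_mult_index simp del: index_mult_mat(1)\<close>)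

lemma mat_trace_mat_unit_mult:
  assumes "M \<in> carrier_mat n n" "i < n" "j < n"
  shows "mat_trace (mat_unit n i j * M) = M $$ (j, i)"
  using assms by (simp add: mat_trace_def mat_unit_mult_index del: index_mult_mat(1))

lemma commuting_mat_scalar:
  fixes A :: "'a::comm_ring_1 mat"
  assumes A: "A \<in> carrier_mat n n" and comm: "\<And>U. U \<in> carrier_mat n n \<Longrightarrow> A * U = U * A"
    and p: "p < n" and q: "q < n"
  shows "A $$ (p, q) = (if p = q then A $$ (0, 0) else 0)"
proof (cases "p = q")
  case True
  have "(A * mat_unit n p 0) $$ (p, 0) = (mat_unit n p 0 * A) $$ (p, 0)"
    using comm[of "mat_unit n p 0"] by simp
  then show ?thesis using True A p q by (simp add: mult_mat_unit_index mat_unit_mult_index del: index_mult_mat(1))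
next
  case False
  have "(A * mat_unit n q q) $$ (p, q) = (mat_unit n q q * A) $$ (p, q)"
    using comm[of "mat_unit n q q"] by simp
  then show ?thesis using False A p q by (simp add: mult_mat_unit_index mat_unit_mult_index del: index_mult_mat(1))
qed

lemma central_idempotent_mat:
  fixes A :: "'a::idom mat"
  assumes A: "A \<in> carrier_mat n n" and comm: "\<And>U. U \<in> carrier_mat n n \<Longrightarrow> A * U = U * A"
    and idem: "A * A = A" and nonzero: "A \<noteq> 0\<^sub>m n n"
  shows "A = 1\<^sub>m n"
proof -
  define \<alpha> where "\<alpha> = A $$ (0, 0)"
  have scalar: "A $$ (p, q) = (if p = q then \<alpha> else 0)" if "p < n" "q < n" for p q
    unfolding \<alpha>_def using commuting_mat_scalar[OF A comm that] .
  have "\<alpha> \<noteq> 0"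
  proof
    assume "\<alpha> = 0"
    then have "A = 0\<^sub>m n n" using A by (intro eq_matI) (simp_all add: scalar)
    with nonzero show False ..
  qed
  have "n \<noteq> 0"
  proof
    assume "n = 0"
    then have "A = 0\<^sub>m n n" using A by (intro eq_matI) simp_all
    with nonzero show False ..
  qed
  have "\<alpha> = (A * A) $$ (0, 0)" using idem by (simp add: \<alpha>_def)
  also have "\<dots> = (\<Sum>k<n. A $$ (0, k) * A $$ (k, 0))"
    using A \<open>n \<noteq> 0\<close> by (simp add: index_mult_mat_sum[of _ n] del: index_mult_mat(1))
  also have "\<dots> = (\<Sum>k<n. if k = 0 then \<alpha> * \<alpha> else 0)"
    using \<open>n \<noteq> 0\<close> by (intro sum.cong) (auto simp: scalar)
  also have "\<dots> = \<alpha> * \<alpha>" using \<open>n \<noteq> 0\<close> by simp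
  finally have "\<alpha> * \<alpha> = \<alpha> * 1" by simp
  then have "\<alpha> = 1" using \<open>\<alpha> \<noteq> 0\<close> by simp
  then show ?thesis using A by (intro eq_matI) (simp_all add: scalar)
qed

context valued_residue_field
begin

definition integral_mat :: "nat \<Rightarrow> 'k mat \<Rightarrow> bool" where
  "integral_mat n A \<longleftrightarrow> A \<in> carrier_mat n n \<and> (\<forall>i<n. \<forall>j<n. A $$ (i, j) \<in> val_ring nu)"

lemma integral_matD:
  "integral_mat n A \<Longrightarrow> A \<in> carrier_mat n n"
  "integral_mat n A \<Longrightarrow> i < n \<Longrightarrow> j < n \<Longrightarrow> A $$ (i, j) \<in> val_ring nu"
  unfolding integral_mat_def by blast+

lemma integral_mat_mult:
  assumes A: "integral_mat n A" and B: "integral_mat n B" shows "integral_mat n (A * B)"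
  using integral_matD[OF A] integral_matD[OF B]
  by (auto simp: integral_mat_def index_mult_mat_sum[of _ n] simp del: index_mult_mat(1) intro!: val_ring_sum val_ring_mult)

lemma res_mat_mult:
  assumes A: "integral_mat n A" and B: "integral_mat n B"
  shows "map_mat res (A * B) = map_mat res A * map_mat res B"
proof (rule eq_matI)
  fix i j assume "i < dim_row (map_mat res A * map_mat res B)" "j < dim_col (map_mat res A * map_mat res B)"
  with integral_matD[OF A] integral_matD[OF B]
  show "map_mat res (A * B) $$ (i, j) = (map_mat res A * map_mat res B) $$ (i, j)"
    by (simp add: index_mult_mat_sum[of _ n] del: index_mult_mat(1)) (subst res_sum; auto simp: res_mult intro: val_ring_mult)
qed (use integral_matD(1)[OF A] integral_matD(1)[OF B] in auto)

lemma mat_trace_integral: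
  assumes A: "integral_mat n A"
  shows "mat_trace A \<in> val_ring nu" "res (mat_trace A) = mat_trace (map_mat res A)"
  using integral_matD[OF A] by (auto simp: mat_trace_def intro!: val_ring_sum) (subst res_sum; auto)

end

section \<open>Split semisimple algebras\<close>

definition linear_form :: "('k::field \<Rightarrow> 'h::ab_group_add \<Rightarrow> 'h) \<Rightarrow> ('h \<Rightarrow> 'k) \<Rightarrow> bool" where
  "linear_form scale L \<longleftrightarrow> (\<forall>x y. L (x + y) = L x + L y) \<and> (\<forall>k x. L (scale k x) = k * L x)"

lemma linear_form_add: "linear_form scale L \<Longrightarrow> L (x + y) = L x + L y"
  and linear_form_scale: "linear_form scale L \<Longrightarrow> L (scale k x) = k * L x"
  unfolding linear_form_def by blast+

lemma linear_form_zero: "linear_form scale L \<Longrightarrow> L 0 = 0"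
  using linear_form_add[of scale L 0 0] by (metis add_cancel_left_right)

lemma linear_form_sum: "linear_form scale L \<Longrightarrow> L (sum g S) = (\<Sum>i\<in>S. L (g i))"
  by (induction S rule: infinite_finite_induct) (simp_all add: linear_form_add linear_form_zero)

lemma linear_form_scale_sum:
  "linear_form scale L \<Longrightarrow> L (\<Sum>i\<in>S. scale (f i) (g i)) = (\<Sum>i\<in>S. f i * L (g i))"
  by (simp add: linear_form_sum linear_form_scale)

lemma linear_form_sum_cmult:
  "(\<And>i. i \<in> S \<Longrightarrow> linear_form scale (L i)) \<Longrightarrow> linear_form scale (\<lambda>x. \<Sum>i\<in>S. k i * L i x)"
  unfolding linear_form_def by (simp add: sum.distrib sum_distrib_left distrib_left mult.left_commute)

locale split_semisimple_algebra =
  fixes scale :: "'k::field \<Rightarrow> 'h::ring_1 \<Rightarrow> 'h"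
    and Lam :: "'l set" and d :: "'l \<Rightarrow> nat" and sigma :: "'l \<Rightarrow> 'h \<Rightarrow> 'k mat"
  assumes K_algebra: "is_K_algebra scale"
    and wedderburn: "is_split_semisimple_wedderburn scale Lam d sigma"
begin

sublocale vector_space scale
  using K_algebra unfolding is_K_algebra_def by blast

lemma scale_mult_left: "scale k x * y = scale k (x * y)"
  and scale_mult_right: "x * scale k y = scale k (x * y)"
  using K_algebra unfolding is_K_algebra_def by metis+

lemma finite_Lam: "finite Lam"
  and d_pos: "lam \<in> Lam \<Longrightarrow> 0 < d lam"
  and sigma_inj: "(\<And>lam. lam \<in> Lam \<Longrightarrow> sigma lam x = sigma lam y) \<Longrightarrow> x = y"
  and sigma_surj: "(\<And>lam. lam \<in> Lam \<Longrightarrow> M lam \<in> carrier_mat (d lam) (d lam)) \<Longrightarrow>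
     \<exists>x. \<forall>lam\<in>Lam. sigma lam x = M lam"
  using wedderburn unfolding is_split_semisimple_wedderburn_def by blast+

lemma sigma_carrier [simp]: "lam \<in> Lam \<Longrightarrow> sigma lam x \<in> carrier_mat (d lam) (d lam)"
  and sigma_add: "lam \<in> Lam \<Longrightarrow> sigma lam (x + y) = sigma lam x + sigma lam y"
  and sigma_scale: "lam \<in> Lam \<Longrightarrow> sigma lam (scale k x) = k \<cdot>\<^sub>m sigma lam x"
  and sigma_mult: "lam \<in> Lam \<Longrightarrow> sigma lam (x * y) = sigma lam x * sigma lam y"
  and sigma_one: "lam \<in> Lam \<Longrightarrow> sigma lam 1 = 1\<^sub>m (d lam)"
  using wedderburn unfolding is_split_semisimple_wedderburn_def is_matrix_rep_def by blast+

lemma sigma_dim [simp]: "lam \<in> Lam \<Longrightarrow> dim_row (sigma lam x) = d lam"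
  "lam \<in> Lam \<Longrightarrow> dim_col (sigma lam x) = d lam"
  using sigma_carrier by blast+

lemma linear_form_sigma_index:
  "lam \<in> Lam \<Longrightarrow> p < d lam \<Longrightarrow> q < d lam \<Longrightarrow> linear_form scale (\<lambda>h. sigma lam h $$ (p, q))"
  unfolding linear_form_def by (simp add: sigma_add sigma_scale)

lemma sigma_zero: "lam \<in> Lam \<Longrightarrow> sigma lam 0 = 0\<^sub>m (d lam) (d lam)"
  by (rule eq_matI) (auto simp: linear_form_zero[OF linear_form_sigma_index])

lemma linear_form_character: "lam \<in> Lam \<Longrightarrow> linear_form scale (character sigma lam)"
  unfolding linear_form_def character_def
  by (simp add: sigma_add sigma_scale mat_trace_carrier[of _ "d lam"] sum.distrib sum_distrib_left)

lemma linear_form_character_mult: "lam \<in> Lam \<Longrightarrow> linear_form scale (\<lambda>x. character sigma lam (w * x))"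
  using linear_form_character unfolding linear_form_def by (simp add: distrib_left scale_mult_right)

lemma character_mult_comm: "lam \<in> Lam \<Longrightarrow> character sigma lam (x * y) = character sigma lam (y * x)"
  unfolding character_def by (simp add: sigma_mult mat_trace_mult_comm[of _ "d lam"])

definition block :: "'l \<Rightarrow> 'k mat \<Rightarrow> 'h" where
  "block lam A = (SOME x. \<forall>mu\<in>Lam. sigma mu x = (if mu = lam then A else 0\<^sub>m (d mu) (d mu)))"

lemma sigma_block:
  assumes "lam \<in> Lam" "A \<in> carrier_mat (d lam) (d lam)" "mu \<in> Lam"
  shows "sigma mu (block lam A) = (if mu = lam then A else 0\<^sub>m (d mu) (d mu))"
proof -
  have "\<exists>x. \<forall>mu\<in>Lam. sigma mu x = (if mu = lam then A else 0\<^sub>m (d mu) (d mu))"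
    by (rule sigma_surj) (use assms in auto)
  then have "\<forall>mu\<in>Lam. sigma mu (block lam A) = (if mu = lam then A else 0\<^sub>m (d mu) (d mu))"
    unfolding block_def by (rule someI_ex)
  then show ?thesis using assms(3) by blast
qed

lemma sigma_block_same: "lam \<in> Lam \<Longrightarrow> A \<in> carrier_mat (d lam) (d lam) \<Longrightarrow> sigma lam (block lam A) = A"
  by (simp add: sigma_block)

lemma block_zero: "lam \<in> Lam \<Longrightarrow> block lam (0\<^sub>m (d lam) (d lam)) = 0"
  by (rule sigma_inj) (simp add: sigma_block sigma_zero)

lemma block_mult:
  assumes "lam \<in> Lam" "A \<in> carrier_mat (d lam) (d lam)" "B \<in> carrier_mat (d lam) (d lam)"
  shows "block lam (A * B) = block lam A * block lam B"
  by (rule sigma_inj) (use assms in \<open>simp add: sigma_mult sigma_block\<close>)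

definition central_idem :: "'l \<Rightarrow> 'h" where
  "central_idem lam = block lam (1\<^sub>m (d lam))"

definition matrix_unit :: "'l \<Rightarrow> nat \<Rightarrow> nat \<Rightarrow> 'h" where
  "matrix_unit lam i j = block lam (mat_unit (d lam) i j)"

lemma sigma_central_idem:
  "lam \<in> Lam \<Longrightarrow> mu \<in> Lam \<Longrightarrow>
    sigma mu (central_idem lam) = (if mu = lam then 1\<^sub>m (d mu) else 0\<^sub>m (d mu) (d mu))"
  unfolding central_idem_def by (simp add: sigma_block)

lemma central_idem_commute: "lam \<in> Lam \<Longrightarrow> central_idem lam * h = h * central_idem lam"
  by (rule sigma_inj) (simp add: sigma_mult sigma_central_idem)

lemma central_idem_idem: "lam \<in> Lam \<Longrightarrow> central_idem lam * central_idem lam = central_idem lam"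
  by (rule sigma_inj) (simp add: sigma_mult sigma_central_idem)

lemma central_idem_mult_block:
  "lam \<in> Lam \<Longrightarrow> A \<in> carrier_mat (d lam) (d lam) \<Longrightarrow> central_idem lam * block lam A = block lam A"
  by (rule sigma_inj) (simp add: sigma_mult sigma_central_idem sigma_block)

lemma character_central_idem_mult:
  "lam \<in> Lam \<Longrightarrow> mu \<in> Lam \<Longrightarrow>
    character sigma mu (central_idem lam * h) = (if mu = lam then character sigma mu h else 0)"
  unfolding character_def by (simp add: sigma_mult sigma_central_idem mat_trace_def)

lemma matrix_unit_mult:
  assumes "lam \<in> Lam" "j < d lam" "k < d lam"
  shows "matrix_unit lam i j * matrix_unit lam k l = (if j = k then matrix_unit lam i l else 0)"
  using assms by (simp add: matrix_unit_def block_mult[symmetric] mat_unit_mult_mat_unit block_zero)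

lemma sigma_matrix_unit:
  "lam \<in> Lam \<Longrightarrow> mu \<in> Lam \<Longrightarrow>
    sigma mu (matrix_unit lam i j) = (if mu = lam then mat_unit (d lam) i j else 0\<^sub>m (d mu) (d mu))"
  by (simp add: matrix_unit_def sigma_block)

lemma central_idem_mult_expansion:
  assumes lam: "lam \<in> Lam"
  shows "central_idem lam * h = (\<Sum>i<d lam. \<Sum>j<d lam. scale (sigma lam h $$ (i, j)) (matrix_unit lam i j))"
    (is "_ = ?R")
proof (rule sigma_inj, rule eq_matI)
  fix mu p q assume mu: "mu \<in> Lam" and "p < dim_row (sigma mu ?R)" "q < dim_col (sigma mu ?R)"
  then have p: "p < d mu" and q: "q < d mu" by auto
  have "sigma mu ?R $$ (p, q) =
      (\<Sum>i<d lam. \<Sum>j<d lam. sigma lam h $$ (i, j) * sigma mu (matrix_unit lam i j) $$ (p, q))"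
    by (simp add: linear_form_sum[OF linear_form_sigma_index[OF mu p q]]
        linear_form_scale[OF linear_form_sigma_index[OF mu p q]])
  also have "\<dots> = (if mu = lam then sigma lam h $$ (p, q) else 0)"
  proof (cases "mu = lam")
    case True
    then have "(\<Sum>i<d lam. \<Sum>j<d lam. sigma lam h $$ (i, j) * sigma mu (matrix_unit lam i j) $$ (p, q)) =
        (\<Sum>i<d lam. \<Sum>j<d lam. if i = p \<and> j = q then sigma lam h $$ (i, j) else 0)"
      using lam p q by (intro sum.cong refl) (simp add: sigma_matrix_unit)
    then show ?thesis using True p q by (simp add: sum_sum_delta)
  qed (use lam mu p q in \<open>simp add: sigma_matrix_unit\<close>)
  also have "\<dots> = sigma mu (central_idem lam * h) $$ (p, q)"
    using lam mu p q by (simp add: sigma_mult sigma_central_idem)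
  finally show "sigma mu (central_idem lam * h) $$ (p, q) = sigma mu ?R $$ (p, q)" ..
qed simp_all

lemma sum_central_idem: "(\<Sum>lam\<in>Lam. central_idem lam) = 1"
proof (rule sigma_inj, rule eq_matI)
  fix mu p q assume mu: "mu \<in> Lam" and "p < dim_row (sigma mu 1)" "q < dim_col (sigma mu 1)"
  then have p: "p < d mu" and q: "q < d mu" by (auto simp: sigma_one)
  have "sigma mu (\<Sum>lam\<in>Lam. central_idem lam) $$ (p, q) = (\<Sum>lam\<in>Lam. sigma mu (central_idem lam) $$ (p, q))"
    by (rule linear_form_sum[OF linear_form_sigma_index[OF mu p q]])
  also have "\<dots> = (\<Sum>lam\<in>Lam. if lam = mu then 1\<^sub>m (d mu) $$ (p, q) else 0)"
    using mu p q by (intro sum.cong refl) (auto simp: sigma_central_idem)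
  also have "\<dots> = sigma mu 1 $$ (p, q)"
    using mu finite_Lam by (simp add: sigma_one)
  finally show "sigma mu (\<Sum>lam\<in>Lam. central_idem lam) $$ (p, q) = sigma mu 1 $$ (p, q)" .
qed (simp_all add: sigma_one)

lemma finite_spanning_set: "\<exists>S. finite S \<and> span S = UNIV"
proof (intro exI conjI)
  let ?I = "Sigma Lam (\<lambda>lam. {..<d lam} \<times> {..<d lam})"
  let ?S = "(\<lambda>(lam, i, j). matrix_unit lam i j) ` ?I"
  show "finite ?S" using finite_Lam by auto
  have "h \<in> span ?S" for h
  proof -
    have "h = (\<Sum>lam\<in>Lam. central_idem lam * h)"
      by (simp add: sum_distrib_right[symmetric] sum_central_idem)
    also have "\<dots> = (\<Sum>lam\<in>Lam. \<Sum>i<d lam. \<Sum>j<d lam. scale (sigma lam h $$ (i, j)) (matrix_unit lam i j))"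
      by (intro sum.cong refl) (rule central_idem_mult_expansion)
    also have "\<dots> \<in> span ?S"
      by (intro span_sum span_scale span_base) (auto intro!: image_eqI[where x = "(_, _, _)"])
    finally show ?thesis .
  qed
  then show "span ?S = UNIV" by blast
qed

lemma cyclic_linear_form_on_block:
  assumes L: "linear_form scale L" and cyclic: "\<And>x y. L (x * y) = L (y * x)" and lam: "lam \<in> Lam"
  shows "L (central_idem lam * h) = L (matrix_unit lam 0 0) * character sigma lam h"
proof -
  have d0: "0 < d lam" using d_pos[OF lam] .
  have unit: "L (matrix_unit lam i j) = (if i = j then L (matrix_unit lam 0 0) else 0)"
    if "i < d lam" "j < d lam" for i j
  proof -
    have "L (matrix_unit lam i j) = L (matrix_unit lam i 0 * matrix_unit lam 0 j)"
      using that d0 lam by (simp add: matrix_unit_mult)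
    also have "\<dots> = L (matrix_unit lam 0 j * matrix_unit lam i 0)" by (rule cyclic)
    finally show ?thesis using that d0 lam linear_form_zero[OF L] by (simp add: matrix_unit_mult)
  qed
  have "L (central_idem lam * h) =
      (\<Sum>i<d lam. \<Sum>j<d lam. sigma lam h $$ (i, j) * L (matrix_unit lam i j))"
    by (simp add: central_idem_mult_expansion[OF lam] linear_form_sum[OF L] linear_form_scale[OF L])
  also have "\<dots> = (\<Sum>i<d lam. \<Sum>j<d lam. if j = i then L (matrix_unit lam 0 0) * sigma lam h $$ (i, i) else 0)"
  proof (intro sum.cong refl)
    fix i j assume "i \<in> {..<d lam}" "j \<in> {..<d lam}"
    then show "sigma lam h $$ (i, j) * L (matrix_unit lam i j) =
        (if j = i then L (matrix_unit lam 0 0) * sigma lam h $$ (i, i) else 0)"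
      using unit[of i j] by (auto simp: mult.commute)
  qed
  also have "\<dots> = (\<Sum>i<d lam. L (matrix_unit lam 0 0) * sigma lam h $$ (i, i))"
    by simp
  also have "\<dots> = L (matrix_unit lam 0 0) * character sigma lam h"
    using lam by (simp add: character_def mat_trace_carrier[of _ "d lam"] sum_distrib_left)
  finally show ?thesis .
qed

end

section \<open>Symmetric algebras with an involution\<close>

locale symmetric_star_algebra = split_semisimple_algebra scale Lam d sigma
  for scale :: "'k::field \<Rightarrow> 'h::ring_1 \<Rightarrow> 'h" and Lam :: "'l set" and d sigma +
  fixes tau :: "'h \<Rightarrow> 'k" and star :: "'h \<Rightarrow> 'h" and B :: "'h set" and c :: "'l \<Rightarrow> 'k"
  assumes symmetrizing_trace: "is_symmetrizing_trace scale tau"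
    and involution: "is_involution scale star"
    and star_symmetric_basis: "is_star_sym_basis scale tau star B"
    and schur_elements: "are_schur_elements tau Lam sigma c"
begin

lemma star_add: "star (x + y) = star x + star y"
  and star_scale: "star (scale k x) = scale k (star x)"
  and star_mult: "star (x * y) = star y * star x"
  and star_star [simp]: "star (star x) = x"
  using involution unfolding is_involution_def by blast+

lemma linear_form_star: "linear_form scale L \<Longrightarrow> linear_form scale (\<lambda>x. L (star x))"
  unfolding linear_form_def by (simp add: star_add star_scale)

lemma tau_mult_comm: "tau (x * y) = tau (y * x)"
  using symmetrizing_trace unfolding is_symmetrizing_trace_def by blast

lemma linear_form_tau_mult: "linear_form scale (\<lambda>x. tau (x * w))"
  using symmetrizing_trace unfolding is_symmetrizing_trace_def linear_form_def
  by (simp add: distrib_right scale_mult_left)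

lemma star_mem_B: "b \<in> B \<Longrightarrow> star b \<in> B"
  and tau_B_dual: "b \<in> B \<Longrightarrow> b' \<in> B \<Longrightarrow> tau (b * star b') = (if b = b' then 1 else 0)"
  and independent_B: "independent B"
  and span_B: "span B = UNIV"
  using star_symmetric_basis unfolding is_star_sym_basis_def by blast+

lemma schur_nonzero: "lam \<in> Lam \<Longrightarrow> c lam \<noteq> 0"
  and tau_eq_sum_character: "tau h = (\<Sum>lam\<in>Lam. inverse (c lam) * character sigma lam h)"
  using schur_elements unfolding are_schur_elements_def by blast+

lemma finite_B: "finite B"
  using finite_spanning_set independent_span_bound[OF _ independent_B] by auto

lemma dual_basis_expansion:
  assumes L: "linear_form scale L"
  shows "L h = (\<Sum>b\<in>B. tau (h * star b) * L b)"
proof -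
  obtain u where u: "h = (\<Sum>b\<in>B. scale (u b) b)"
    using span_B span_finite[OF finite_B] by auto
  have "tau (h * star b') = u b'" if "b' \<in> B" for b'
  proof -
    have "tau (h * star b') = (\<Sum>b\<in>B. u b * tau (b * star b'))"
      unfolding u by (rule linear_form_scale_sum[OF linear_form_tau_mult])
    also have "\<dots> = u b'"
      using that finite_B by (simp add: tau_B_dual if_distrib[of "(*) _"] cong: if_cong)
    finally show ?thesis .
  qed
  then show ?thesis
    unfolding u[symmetric] by (simp add: u linear_form_scale_sum[OF L])
qed

lemma tau_block_mult:
  assumes "lam \<in> Lam" "A \<in> carrier_mat (d lam) (d lam)"
  shows "tau (block lam A * h) = inverse (c lam) * mat_trace (A * sigma lam h)"
proof -
  have "tau (block lam A * h) =
      (\<Sum>mu\<in>Lam. if mu = lam then inverse (c lam) * mat_trace (A * sigma lam h) else 0)"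
    unfolding tau_eq_sum_character character_def
    using assms by (intro sum.cong refl) (simp add: sigma_mult sigma_block mat_trace_def)
  then show ?thesis using assms finite_Lam by simp
qed

lemma tau_central_idem_mult:
  "lam \<in> Lam \<Longrightarrow> tau (central_idem lam * h) = inverse (c lam) * character sigma lam h"
  unfolding central_idem_def character_def by (simp add: tau_block_mult)

lemma sum_character_star_mult:
  assumes L: "linear_form scale L" and mu: "mu \<in> Lam"
  shows "(\<Sum>z\<in>B. character sigma mu (star z) * L z) = c mu * L (central_idem mu)"
proof -
  have "L (central_idem mu) = inverse (c mu) * (\<Sum>z\<in>B. character sigma mu (star z) * L z)"
    by (simp add: dual_basis_expansion[OF L, of "central_idem mu"] tau_central_idem_mult[OF mu]
        sum_distrib_left mult.assoc)
  then show ?thesis using schur_nonzero[OF mu] by simp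
qed

lemma rep_of_type_dual_element:
  assumes lam: "lam \<in> Lam" and r: "is_rep_of_type scale d sigma lam r" and ij: "i < d lam" "j < d lam"
  obtains G where "central_idem lam * G = G" "r G = mat_unit (d lam) i j"
    "\<And>h. tau (G * h) = inverse (c lam) * r h $$ (j, i)"
proof -
  obtain P Q where P: "P \<in> carrier_mat (d lam) (d lam)" and Q: "Q \<in> carrier_mat (d lam) (d lam)"
    and PQ: "P * Q = 1\<^sub>m (d lam)" and r_eq: "\<And>h. r h = P * sigma lam h * Q"
    using r unfolding is_rep_of_type_def by blast
  have r_carrier: "r h \<in> carrier_mat (d lam) (d lam)" for h
    using r unfolding is_rep_of_type_def is_matrix_rep_def by blast
  define E where "E = (mat_unit (d lam) i j :: 'k mat)"
  have E: "E \<in> carrier_mat (d lam) (d lam)" by (simp add: E_def)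
  define G where "G = block lam (Q * E * P)"
  have QEP: "Q * E * P \<in> carrier_mat (d lam) (d lam)" using P Q E by simp
  show thesis
  proof
    show "central_idem lam * G = G"
      unfolding G_def by (rule central_idem_mult_block[OF lam QEP])
    have "r G = P * (Q * (E * (P * Q)))"
      using P Q E QEP lam by (simp add: r_eq G_def sigma_block_same assoc_mult_mat[of _ "d lam" "d lam" _ "d lam" _ "d lam"])
    also have "\<dots> = (P * Q) * E * (P * Q)"
      using P Q E by (simp add: assoc_mult_mat[of _ "d lam" "d lam" _ "d lam" _ "d lam"])
    finally have "r G = (P * Q) * E * (P * Q)" .
    then show "r G = mat_unit (d lam) i j" using PQ E by (simp add: E_def)
    fix h
    have "mat_trace (Q * E * P * sigma lam h) = mat_trace (Q * (E * P * sigma lam h))"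
      using P Q E lam by (simp add: assoc_mult_mat[of _ "d lam" "d lam" _ "d lam" _ "d lam"])
    also have "\<dots> = mat_trace (E * P * sigma lam h * Q)"
      using P Q E lam by (intro mat_trace_mult_comm) auto
    also have "\<dots> = mat_trace (E * r h)"
      using P Q E lam by (simp add: r_eq assoc_mult_mat[of _ "d lam" "d lam" _ "d lam" _ "d lam"])
    also have "\<dots> = r h $$ (j, i)"
      unfolding E_def using ij r_carrier by (intro mat_trace_mat_unit_mult)
    finally show "tau (G * h) = inverse (c lam) * r h $$ (j, i)"
      unfolding G_def using lam QEP by (simp add: tau_block_mult)
  qed
qed

lemma rep_of_type_entry_sums:
  assumes lam: "lam \<in> Lam" and r: "is_rep_of_type scale d sigma lam r"
  shows "(\<Sum>b\<in>B. r (star b) $$ (0, 0) * r b $$ (0, 0)) = c lam"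
    and "sigma lam (star (central_idem lam)) = 0\<^sub>m (d lam) (d lam) \<Longrightarrow>
      (\<Sum>b\<in>B. r (star b) $$ (0, 0) * r (star b) $$ (0, 0)) = 0"
proof -
  have d0: "0 < d lam" using d_pos[OF lam] .
  obtain P Q where P: "P \<in> carrier_mat (d lam) (d lam)" and Q: "Q \<in> carrier_mat (d lam) (d lam)"
    and r_eq: "\<And>h. r h = P * sigma lam h * Q"
    using r unfolding is_rep_of_type_def by blast
  have r_entry: "linear_form scale (\<lambda>h. r h $$ (0, 0))"
    using r d0 unfolding is_rep_of_type_def is_matrix_rep_def linear_form_def by auto
  obtain G where eG: "central_idem lam * G = G" and rG: "r G = mat_unit (d lam) 0 0"
    and tauG: "\<And>h. tau (G * h) = inverse (c lam) * r h $$ (0, 0)"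
    using rep_of_type_dual_element[OF lam r d0 d0] by blast
  have expand: "L G = inverse (c lam) * (\<Sum>b\<in>B. r (star b) $$ (0, 0) * L b)"
    if "linear_form scale L" for L
    using dual_basis_expansion[OF that, of G] by (simp add: tauG sum_distrib_left mult.assoc)
  have "1 = inverse (c lam) * (\<Sum>b\<in>B. r (star b) $$ (0, 0) * r b $$ (0, 0))"
    using expand[OF r_entry] rG d0 by simp
  then show "(\<Sum>b\<in>B. r (star b) $$ (0, 0) * r b $$ (0, 0)) = c lam"
    using schur_nonzero[OF lam] by (simp add: field_simps)
  assume moved: "sigma lam (star (central_idem lam)) = 0\<^sub>m (d lam) (d lam)"
  have "sigma lam (star G) = sigma lam (star G) * sigma lam (star (central_idem lam))"
    using eG by (metis star_mult sigma_mult[OF lam])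
  then have "r (star G) = 0\<^sub>m (d lam) (d lam)"
    using lam moved P Q by (simp add: r_eq)
  then have "0 = inverse (c lam) * (\<Sum>b\<in>B. r (star b) $$ (0, 0) * r (star b) $$ (0, 0))"
    using expand[OF linear_form_star[OF r_entry]] d0 by simp
  then show "(\<Sum>b\<in>B. r (star b) $$ (0, 0) * r (star b) $$ (0, 0)) = 0"
    using schur_nonzero[OF lam] by simp
qed

lemma sigma_star_central_idem_commute:
  assumes lam: "lam \<in> Lam" and U: "U \<in> carrier_mat (d lam) (d lam)"
  shows "sigma lam (star (central_idem lam)) * U = U * sigma lam (star (central_idem lam))"
proof -
  have "star (central_idem lam) * x = x * star (central_idem lam)" for x
    by (metis central_idem_commute[OF lam] star_mult star_star)
  then have "sigma lam (star (central_idem lam) * block lam U) = sigma lam (block lam U * star (central_idem lam))"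
    by simp
  then show ?thesis using lam U by (simp only: sigma_mult sigma_block_same)
qed

lemma sigma_star_central_idem_idem:
  "lam \<in> Lam \<Longrightarrow>
    sigma lam (star (central_idem lam)) * sigma lam (star (central_idem lam)) = sigma lam (star (central_idem lam))"
  by (metis central_idem_idem sigma_mult star_mult)

lemma character_star_if_block_fixed:
  assumes lam: "lam \<in> Lam"
    and star_idem: "sigma lam (star (central_idem lam)) = 1\<^sub>m (d lam)"
    and dim: "(of_nat (d lam) :: 'k) \<noteq> 0"
  shows "character sigma lam (star h) = character sigma lam h"
proof -
  let ?psi = "\<lambda>x. character sigma lam (star x)"
  have psi_linear: "linear_form scale ?psi"
    by (rule linear_form_star[OF linear_form_character[OF lam]])
  have psi_cyclic: "?psi (x * y) = ?psi (y * x)" for x y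
    by (simp add: star_mult character_mult_comm[OF lam])
  have psi_block: "?psi (central_idem lam * x) = ?psi x" for x
    using lam star_idem by (simp add: star_mult sigma_mult character_def)
  have "of_nat (d lam) = ?psi (central_idem lam)"
    using star_idem by (simp add: character_def)
  also have "\<dots> = ?psi (matrix_unit lam 0 0) * of_nat (d lam)"
    using cyclic_linear_form_on_block[OF psi_linear psi_cyclic lam, of 1] lam
    by (simp add: character_def sigma_one)
  finally have "?psi (matrix_unit lam 0 0) = 1" using dim by simp
  then show ?thesis
    using cyclic_linear_form_on_block[OF psi_linear psi_cyclic lam, of h] psi_block[of h] by simp
qed

end

section \<open>Balanced representations\<close>

locale balanced_symmetric_algebra =
  symmetric_star_algebra scale Lam d sigma tau star B c + valued_residue_field nu res
  for scale :: "'k::field \<Rightarrow> 'h::ring_1 \<Rightarrow> 'h" and Lam :: "'l set" and d sigma tau star B c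
    and nu :: "'k \<Rightarrow> 'g::linordered_ab_group_add" and res :: "'k \<Rightarrow> 'f::field" +
  fixes a :: "'l \<Rightarrow> 'g" and v :: "'g \<Rightarrow> 'k" and rho :: "'l \<Rightarrow> 'h \<Rightarrow> 'k mat"
  assumes formally_real_residue: "formally_real TYPE('f)"
    and a_schur: "\<forall>lam\<in>Lam. a lam + a lam = - nu (c lam)"
    and partial_section: "is_partial_section nu (gen_subgroup (a ` Lam)) v"
    and balanced: "\<forall>lam\<in>Lam. is_balanced nu scale tau star d sigma a lam (rho lam)"
begin

lemma v_a_nonzero: "lam \<in> Lam \<Longrightarrow> v (a lam) \<noteq> 0"
  and nu_v_a: "lam \<in> Lam \<Longrightarrow> nu (v (a lam)) = a lam"
  and v_a_add: "lam \<in> Lam \<Longrightarrow> g \<in> gen_subgroup (a ` Lam) \<Longrightarrow> v (a lam + g) = v (a lam) * v g"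
  using partial_section gen_subgroup.gen_base[of "a lam" "a ` Lam"]
  unfolding is_partial_section_def by blast+

lemma v_double: "lam \<in> Lam \<Longrightarrow> v (a lam + a lam) = v (a lam) * v (a lam)"
  by (simp add: v_a_add gen_subgroup.gen_base)

lemma v_triple: "lam \<in> Lam \<Longrightarrow> v (a lam + a lam + a lam) = v (a lam) * v (a lam) * v (a lam)"
  by (simp add: add.assoc v_a_add v_double gen_subgroup.gen_base gen_subgroup.gen_add)

lemma fcoef_eq: "lam \<in> Lam \<Longrightarrow> fcoef v a c lam = v (a lam) * v (a lam) * c lam"
  by (simp add: fcoef_def v_double)

lemma fcoef_nonzero: "lam \<in> Lam \<Longrightarrow> fcoef v a c lam \<noteq> 0"
  by (simp add: fcoef_eq v_a_nonzero schur_nonzero)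

lemma nu_fcoef: "lam \<in> Lam \<Longrightarrow> nu (fcoef v a c lam) = 0"
  using a_schur by (simp add: fcoef_eq nu_mult v_a_nonzero schur_nonzero nu_v_a)

lemma inverse_fcoef_integral: "lam \<in> Lam \<Longrightarrow> inverse (fcoef v a c lam) \<in> val_ring nu"
  and res_fcoef_nonzero: "lam \<in> Lam \<Longrightarrow> res (fcoef v a c lam) \<noteq> 0"
  and res_inverse_fcoef: "lam \<in> Lam \<Longrightarrow> res (inverse (fcoef v a c lam)) = inverse (res (fcoef v a c lam))"
  using val_ring_unit res_unit fcoef_nonzero nu_fcoef by blast+

lemma rho_conj:
  assumes "lam \<in> Lam"
  obtains P Q where "P \<in> carrier_mat (d lam) (d lam)" "Q \<in> carrier_mat (d lam) (d lam)"
    "Q * P = 1\<^sub>m (d lam)" "\<And>h. rho lam h = P * sigma lam h * Q"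
  using assms balanced unfolding is_balanced_def is_rep_of_type_def by blast

lemma rho_of_type: "lam \<in> Lam \<Longrightarrow> is_rep_of_type scale d sigma lam (rho lam)"
  using balanced unfolding is_balanced_def by blast

lemma rho_carrier [simp]: "lam \<in> Lam \<Longrightarrow> rho lam h \<in> carrier_mat (d lam) (d lam)"
  and rho_mult: "lam \<in> Lam \<Longrightarrow> rho lam (x * y) = rho lam x * rho lam y"
  using rho_of_type unfolding is_rep_of_type_def is_matrix_rep_def by blast+

lemma rho_dim [simp]: "lam \<in> Lam \<Longrightarrow> dim_row (rho lam h) = d lam"
  "lam \<in> Lam \<Longrightarrow> dim_col (rho lam h) = d lam"
  using rho_carrier by blast+

lemma mat_trace_rho:
  assumes lam: "lam \<in> Lam" shows "mat_trace (rho lam h) = character sigma lam h"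
proof (rule rho_conj[OF lam])
  fix P Q assume "P \<in> carrier_mat (d lam) (d lam)" "Q \<in> carrier_mat (d lam) (d lam)"
    "Q * P = 1\<^sub>m (d lam)" "\<And>h. rho lam h = P * sigma lam h * Q"
  then show ?thesis using lam by (simp add: character_def mat_trace_similar)
qed

definition scaled_rho :: "'l \<Rightarrow> 'h \<Rightarrow> 'k mat" where
  "scaled_rho lam h = v (a lam) \<cdot>\<^sub>m rho lam h"

lemma scaled_rho_integral:
  assumes lam: "lam \<in> Lam" and b: "b \<in> B"
  shows "integral_mat (d lam) (scaled_rho lam b)"
  unfolding integral_mat_def scaled_rho_def
proof (intro conjI allI impI)
  fix i j assume "i < d lam" "j < d lam"
  then have "val_ge nu (rho lam b $$ (i, j)) (- nu (v (a lam)))"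
    using balanced star_symmetric_basis lam b nu_v_a unfolding is_balanced_def by metis
  then show "(v (a lam) \<cdot>\<^sub>m rho lam b) $$ (i, j) \<in> val_ring nu"
    using \<open>i < d lam\<close> \<open>j < d lam\<close> lam by (simp add: val_ring_mult_val_ge v_a_nonzero)
qed (use lam in simp)

lemma leadmat_carrier [simp]: "lam \<in> Lam \<Longrightarrow> leadmat res v a rho lam h \<in> carrier_mat (d lam) (d lam)"
  by (simp add: leadmat_def)

lemma leadmat_eq: "leadmat res v a rho lam h = map_mat res (scaled_rho lam h)"
  by (simp add: leadmat_def scaled_rho_def)

lemma scaled_rho_carrier [simp]: "lam \<in> Lam \<Longrightarrow> scaled_rho lam h \<in> carrier_mat (d lam) (d lam)"
  by (simp add: scaled_rho_def)

lemma scaled_rho_mult: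
  "lam \<in> Lam \<Longrightarrow> scaled_rho lam x * scaled_rho lam y = v (a lam) \<cdot>\<^sub>m scaled_rho lam (x * y)"
  by (simp add: scaled_rho_def mult_smult_distrib[of _ "d lam" "d lam" _ "d lam"]
      mult_smult_assoc_mat[of _ "d lam" "d lam" _ "d lam"] rho_mult)

lemma mat_trace_scaled_rho: "lam \<in> Lam \<Longrightarrow> mat_trace (scaled_rho lam h) = v (a lam) * character sigma lam h"
  by (simp add: scaled_rho_def mat_trace_smult[of _ "d lam"] mat_trace_rho)

lemma mat_trace_scaled_rho_mult3:
  assumes lam: "lam \<in> Lam"
  shows "mat_trace (scaled_rho lam x * (scaled_rho lam y * scaled_rho lam z)) =
    v (a lam + a lam + a lam) * character sigma lam (x * y * z)"
  using lam by (simp add: scaled_rho_mult mult_smult_distrib[of _ "d lam" "d lam" _ "d lam"]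
      mat_trace_smult[of _ "d lam"] mat_trace_scaled_rho v_triple mult.assoc)

lemma gamma_coef_summand:
  assumes lam: "lam \<in> Lam" and xyz: "x \<in> B" "y \<in> B" "z \<in> B"
  defines "g \<equiv> inverse (fcoef v a c lam) * v (a lam + a lam + a lam) * character sigma lam (x * y * z)"
  shows "g \<in> val_ring nu"
    and "(\<Sum>s<d lam. \<Sum>t<d lam. \<Sum>u<d lam. inverse (res (fcoef v a c lam)) *
        leadmat res v a rho lam x $$ (s, t) * leadmat res v a rho lam y $$ (t, u) *
        leadmat res v a rho lam z $$ (u, s)) = res g"
proof -
  let ?M = "scaled_rho lam x * (scaled_rho lam y * scaled_rho lam z)"
  have int_x: "integral_mat (d lam) (scaled_rho lam x)"
    and int_y: "integral_mat (d lam) (scaled_rho lam y)"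
    and int_z: "integral_mat (d lam) (scaled_rho lam z)"
    using lam xyz by (simp_all add: scaled_rho_integral)
  have int_yz: "integral_mat (d lam) (scaled_rho lam y * scaled_rho lam z)"
    by (rule integral_mat_mult[OF int_y int_z])
  have int: "integral_mat (d lam) ?M"
    by (rule integral_mat_mult[OF int_x int_yz])
  have g: "g = inverse (fcoef v a c lam) * mat_trace ?M"
    unfolding g_def using lam by (simp add: mat_trace_scaled_rho_mult3 mult.assoc)
  show "g \<in> val_ring nu"
    unfolding g using lam int by (intro val_ring_mult inverse_fcoef_integral mat_trace_integral)
  have "map_mat res ?M = leadmat res v a rho lam x * (leadmat res v a rho lam y * leadmat res v a rho lam z)"
    by (simp add: leadmat_eq res_mat_mult[OF int_x int_yz] res_mat_mult[OF int_y int_z])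
  then have "(\<Sum>s<d lam. \<Sum>t<d lam. \<Sum>u<d lam.
        leadmat res v a rho lam x $$ (s, t) * leadmat res v a rho lam y $$ (t, u) *
        leadmat res v a rho lam z $$ (u, s)) = res (mat_trace ?M)"
    using lam by (simp add: mat_trace_integral(2)[OF int] mat_trace_mult3_sum[of _ "d lam", symmetric])
  moreover have "res g = inverse (res (fcoef v a c lam)) * res (mat_trace ?M)"
    unfolding g using lam int
    by (simp add: res_mult inverse_fcoef_integral mat_trace_integral res_inverse_fcoef)
  ultimately show "(\<Sum>s<d lam. \<Sum>t<d lam. \<Sum>u<d lam. inverse (res (fcoef v a c lam)) *
        leadmat res v a rho lam x $$ (s, t) * leadmat res v a rho lam y $$ (t, u) *
        leadmat res v a rho lam z $$ (u, s)) = res g"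
    by (simp add: sum_distrib_left[symmetric] mult.assoc)
qed

lemma n_coef_summand:
  assumes lam: "lam \<in> Lam" and x: "x \<in> B"
  defines "g \<equiv> inverse (fcoef v a c lam) * v (a lam) * character sigma lam (star x)"
  shows "g \<in> val_ring nu"
    and "(\<Sum>s<d lam. inverse (res (fcoef v a c lam)) * leadmat res v a rho lam (star x) $$ (s, s)) = res g"
proof -
  have int: "integral_mat (d lam) (scaled_rho lam (star x))"
    using lam x by (intro scaled_rho_integral star_mem_B)
  have g: "g = inverse (fcoef v a c lam) * mat_trace (scaled_rho lam (star x))"
    unfolding g_def using lam by (simp add: mat_trace_scaled_rho mult.assoc)
  show "g \<in> val_ring nu"
    unfolding g using lam int by (intro val_ring_mult inverse_fcoef_integral mat_trace_integral)
  have "(\<Sum>s<d lam. leadmat res v a rho lam (star x) $$ (s, s)) = res (mat_trace (scaled_rho lam (star x)))"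
    using lam by (simp add: mat_trace_integral(2)[OF int] mat_trace_carrier[of _ "d lam", symmetric] leadmat_eq)
  moreover have "res g = inverse (res (fcoef v a c lam)) * res (mat_trace (scaled_rho lam (star x)))"
    unfolding g using lam int
    by (simp add: res_mult inverse_fcoef_integral mat_trace_integral res_inverse_fcoef)
  ultimately show "(\<Sum>s<d lam. inverse (res (fcoef v a c lam)) * leadmat res v a rho lam (star x) $$ (s, s)) = res g"
    by (simp add: sum_distrib_left[symmetric])
qed

definition gamma_lift :: "'h \<Rightarrow> 'h \<Rightarrow> 'h \<Rightarrow> 'k" where
  "gamma_lift x y z = (\<Sum>lam\<in>Lam. inverse (fcoef v a c lam) * v (a lam + a lam + a lam)
     * character sigma lam (x * y * z))"

definition n_lift :: "'h \<Rightarrow> 'k" where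
  "n_lift x = (\<Sum>lam\<in>Lam. inverse (fcoef v a c lam) * v (a lam) * character sigma lam (star x))"

lemma gamma_coef_eq_res_gamma_lift:
  assumes "x \<in> B" "y \<in> B" "z \<in> B"
  shows "gamma_lift x y z \<in> val_ring nu" "gamma_coef res v a c Lam d rho x y z = res (gamma_lift x y z)"
  using gamma_coef_summand[OF _ assms]
  by (auto simp: gamma_lift_def gamma_coef_def res_sum intro!: val_ring_sum)

lemma n_coef_eq_res_n_lift:
  assumes "x \<in> B"
  shows "n_lift x \<in> val_ring nu" "n_coef res v a c Lam d rho star x = res (n_lift x)"
  using n_coef_summand[OF _ assms]
  by (auto simp: n_lift_def n_coef_def res_sum intro!: val_ring_sum)

lemma linear_form_gamma_lift: "linear_form scale (gamma_lift x y)"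
  unfolding gamma_lift_def by (intro linear_form_sum_cmult linear_form_character_mult)

lemma gamma_lift_central_idem:
  "mu \<in> Lam \<Longrightarrow> gamma_lift x y (central_idem mu) =
    inverse (fcoef v a c mu) * v (a mu + a mu + a mu) * character sigma mu (x * y)"
  unfolding gamma_lift_def
  by (simp add: central_idem_commute[of mu "x * y", symmetric] character_central_idem_mult
      if_distrib[of "\<lambda>t. _ * t"] finite_Lam cong: if_cong)

lemma sum_gamma_lift_n_lift:
  assumes x: "x \<in> B" and y: "y \<in> B"
  shows "(\<Sum>z\<in>B. gamma_lift (star x) y z * n_lift z) = (if x = y then 1 else 0)"
proof -
  let ?k = "\<lambda>mu. inverse (fcoef v a c mu) * v (a mu)"
  have "(\<Sum>z\<in>B. gamma_lift (star x) y z * n_lift z) =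
      (\<Sum>mu\<in>Lam. ?k mu * (\<Sum>z\<in>B. character sigma mu (star z) * gamma_lift (star x) y z))"
    unfolding n_lift_def
    by (simp add: sum_distrib_left sum_distrib_right mult_ac) (rule sum.swap)
  also have "\<dots> = (\<Sum>mu\<in>Lam. ?k mu * c mu * gamma_lift (star x) y (central_idem mu))"
    by (intro sum.cong refl) (simp add: sum_character_star_mult linear_form_gamma_lift mult.assoc)
  also have "\<dots> = (\<Sum>mu\<in>Lam. inverse (c mu) * character sigma mu (star x * y))"
    by (intro sum.cong refl)
      (simp add: gamma_lift_central_idem v_triple, simp add: fcoef_eq v_a_nonzero schur_nonzero field_simps)
  also have "\<dots> = tau (star x * y)"
    by (simp add: tau_eq_sum_character)
  also have "\<dots> = tau (y * star x)"
    by (rule tau_mult_comm)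
  also have "\<dots> = (if x = y then 1 else 0)"
    using tau_B_dual[OF y x] by auto
  finally show ?thesis .
qed

lemma sigma_star_central_idem_nonzero:
  assumes lam: "lam \<in> Lam"
  shows "sigma lam (star (central_idem lam)) \<noteq> 0\<^sub>m (d lam) (d lam)"
proof
  assume moved: "sigma lam (star (central_idem lam)) = 0\<^sub>m (d lam) (d lam)"
  have d0: "0 < d lam" using d_pos[OF lam] .
  define X where "X b = v (a lam) * rho lam (star b) $$ (0, 0)" for b
  define Y where "Y b = v (a lam) * rho lam b $$ (0, 0)" for b
  have XY: "X b \<in> val_ring nu" "Y b \<in> val_ring nu" if "b \<in> B" for b
    using scaled_rho_integral[OF lam star_mem_B[OF that]] scaled_rho_integral[OF lam that] d0 lam
    unfolding X_def Y_def integral_mat_def scaled_rho_def by auto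
  note sums = rep_of_type_entry_sums[OF lam rho_of_type[OF lam]]
  have "(\<Sum>b\<in>B. res (X b) * res (X b)) = res (\<Sum>b\<in>B. X b * X b)"
    using XY by (simp add: res_sum res_mult val_ring_mult)
  also have "(\<Sum>b\<in>B. X b * X b) = 0"
    using sums(2)[OF moved] by (simp add: X_def mult_ac sum_distrib_left[symmetric])
  finally have "res (X b) = 0" if "b \<in> B" for b
    using formally_real_sum_squares_eq_0[OF formally_real_residue finite_B] that by simp
  then have "(\<Sum>b\<in>B. res (X b) * res (Y b)) = 0" by simp
  also have "(\<Sum>b\<in>B. res (X b) * res (Y b)) = res (\<Sum>b\<in>B. X b * Y b)"
    using XY by (simp add: res_sum res_mult val_ring_mult)
  also have "(\<Sum>b\<in>B. X b * Y b) = fcoef v a c lam"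
    using sums(1) lam by (simp add: X_def Y_def fcoef_eq mult_ac sum_distrib_left[symmetric])
  finally show False using res_fcoef_nonzero[OF lam] by simp
qed

lemma character_star:
  assumes lam: "lam \<in> Lam" shows "character sigma lam (star h) = character sigma lam h"
proof (rule character_star_if_block_fixed[OF lam])
  show "sigma lam (star (central_idem lam)) = 1\<^sub>m (d lam)"
    using lam by (intro central_idempotent_mat sigma_star_central_idem_commute
        sigma_star_central_idem_idem sigma_star_central_idem_nonzero) simp_all
  have "(of_nat (d lam) :: 'f) \<noteq> 0"
    by (rule formally_real_of_nat_neq_0[OF formally_real_residue d_pos[OF lam]])
  then show "(of_nat (d lam) :: 'k) \<noteq> 0"
    by (metis res_of_nat res_zero)
qed

lemma gamma_lift_rotate: "gamma_lift x y z = gamma_lift y z x"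
  unfolding gamma_lift_def by (intro sum.cong refl) (simp add: character_mult_comm[of _ x] mult.assoc)

lemma gamma_lift_star: "gamma_lift x y z = gamma_lift (star y) (star x) (star z)"
proof -
  have "character sigma lam (star y * star x * star z) = character sigma lam (x * y * z)"
    if "lam \<in> Lam" for lam
    using that by (simp add: star_mult[symmetric] character_star character_mult_comm[of _ z] mult.assoc)
  then show ?thesis unfolding gamma_lift_def by (intro sum.cong refl) simp
qed

lemma n_lift_star: "n_lift x = n_lift (star x)"
  unfolding n_lift_def by (intro sum.cong refl) (simp add: character_star)

lemma gamma_coef_rotate:
  "x \<in> B \<Longrightarrow> y \<in> B \<Longrightarrow> z \<in> B \<Longrightarrow>
    gamma_coef res v a c Lam d rho x y z = gamma_coef res v a c Lam d rho y z x"
  by (simp add: gamma_coef_eq_res_gamma_lift gamma_lift_rotate[of x])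

lemma gamma_coef_star:
  "x \<in> B \<Longrightarrow> y \<in> B \<Longrightarrow> z \<in> B \<Longrightarrow>
    gamma_coef res v a c Lam d rho x y z = gamma_coef res v a c Lam d rho (star y) (star x) (star z)"
  by (simp add: gamma_coef_eq_res_gamma_lift star_mem_B gamma_lift_star[of x])

lemma n_coef_star: "x \<in> B \<Longrightarrow> n_coef res v a c Lam d rho star x = n_coef res v a c Lam d rho star (star x)"
  by (simp add: n_coef_eq_res_n_lift star_mem_B n_lift_star[of x])

lemma sum_gamma_coef_n_coef:
  assumes x: "x \<in> B" and y: "y \<in> B"
  shows "(\<Sum>z\<in>B. gamma_coef res v a c Lam d rho (star x) y z * n_coef res v a c Lam d rho star z)
    = (if x = y then 1 else 0)"
proof -
  have integral: "gamma_lift (star x) y z * n_lift z \<in> val_ring nu" if "z \<in> B" for z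
    using that x y by (intro val_ring_mult gamma_coef_eq_res_gamma_lift n_coef_eq_res_n_lift star_mem_B)
  have "(\<Sum>z\<in>B. gamma_coef res v a c Lam d rho (star x) y z * n_coef res v a c Lam d rho star z)
      = (\<Sum>z\<in>B. res (gamma_lift (star x) y z * n_lift z))"
    using x y by (intro sum.cong refl)
      (simp add: gamma_coef_eq_res_gamma_lift n_coef_eq_res_n_lift star_mem_B res_mult)
  also have "\<dots> = res (\<Sum>z\<in>B. gamma_lift (star x) y z * n_lift z)"
    using integral by (simp add: res_sum)
  finally show ?thesis using sum_gamma_lift_n_lift[OF x y] by simp
qed

end

theorem mainTheorem7:
  fixes nu :: "'k::field \<Rightarrow> 'g::linordered_ab_group_add"
    and res :: "'k \<Rightarrow> 'f::field"
    and scale :: "'k \<Rightarrow> 'h::ring_1 \<Rightarrow> 'h"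
    and star :: "'h \<Rightarrow> 'h"
    and tau :: "'h \<Rightarrow> 'k"
    and B :: "'h set"
    and Lam :: "'l set"
    and d :: "'l \<Rightarrow> nat"
    and sigma :: "'l \<Rightarrow> 'h \<Rightarrow> 'k mat"
    and c :: "'l \<Rightarrow> 'k"
    and a :: "'l \<Rightarrow> 'g"
    and v :: "'g \<Rightarrow> 'k"
    and rho :: "'l \<Rightarrow> 'h \<Rightarrow> 'k mat"
  assumes val: "is_surj_valuation nu"
    and resid: "is_residue_map nu res"
    and freal: "formally_real TYPE('f)"
    and alg: "is_K_algebra scale"
    and wedd: "is_split_semisimple_wedderburn scale Lam d sigma"
    and trace_form: "is_symmetrizing_trace scale tau"
    and inv: "is_involution scale star"
    and basis: "is_star_sym_basis scale tau star B"
    and schur: "are_schur_elements tau Lam sigma c"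
    and a_def: "\<forall>lam\<in>Lam. a lam + a lam = - nu (c lam)"
    and sect: "is_partial_section nu (gen_subgroup (a ` Lam)) v"
    and bal: "\<forall>lam\<in>Lam. is_balanced nu scale tau star d sigma a lam (rho lam)"
  shows "\<forall>x\<in>B. \<forall>y\<in>B. \<forall>z\<in>B.
     ((\<Sum>lam\<in>Lam. inverse (fcoef v a c lam) * v (a lam + a lam + a lam)
          * character sigma lam (x * y * z)) \<in> val_ring nu \<and>
      gamma_coef res v a c Lam d rho x y z =
        res (\<Sum>lam\<in>Lam. inverse (fcoef v a c lam) * v (a lam + a lam + a lam)
          * character sigma lam (x * y * z)) \<and>
      (\<Sum>lam\<in>Lam. inverse (fcoef v a c lam) * v (a lam) * character sigma lam (star x))
        \<in> val_ring nu \<and>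
      n_coef res v a c Lam d rho star x =
        res (\<Sum>lam\<in>Lam. inverse (fcoef v a c lam) * v (a lam) * character sigma lam (star x))) \<and>
     gamma_coef res v a c Lam d rho x y z = gamma_coef res v a c Lam d rho y z x \<and>
     (\<Sum>z'\<in>B. gamma_coef res v a c Lam d rho (star x) y z' * n_coef res v a c Lam d rho star z')
        = (if x = y then 1 else 0) \<and>
     gamma_coef res v a c Lam d rho x y z
        = gamma_coef res v a c Lam d rho (star y) (star x) (star z) \<and>
     n_coef res v a c Lam d rho star x = n_coef res v a c Lam d rho star (star x)"
proof -
  interpret balanced_symmetric_algebra scale Lam d sigma tau star B c nu res a v rho
    by unfold_locales (fact assms)+
  show ?thesis
    unfolding gamma_lift_def[symmetric] n_lift_def[symmetric]
    by (intro ballI conjI; (rule gamma_coef_eq_res_gamma_lift n_coef_eq_res_n_lift gamma_coef_rotate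
        sum_gamma_coef_n_coef gamma_coef_star n_coef_star | assumption)+)
qed

end
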